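(* Assume (A1)–(A4) below. Then $\alpha_t(\ell)\ge0$ for every compliance type $t\in\mathcal T$ and every instrument $\ell=1,\dots,L$.
   Context: We observe i.i.d. $(Y_i,D_i,\mathbf Z_i)$, $D_i\in\{0,1\}$, $\mathbf Z_i=(Z_{1i},\dots,Z_{Li})'\in\{0,1\}^L$, $L\ge2$. Units have potential outcomes $Y_i(0),Y_i(1)$ and a compliance type $D_i(\cdot):\{0,1\}^L\to\{0,1\}$ with $D_i=D_i(\mathbf Z_i)$; $\mathcal T$ is the set of types, $\theta_t=P(D_i(\cdot)=t)$, and $t(z_\ell,z_{-\ell})$ is type $t$'s treatment at the instrument vector with $\ell$-th coordinate $z_\ell$, others $z_{-\ell}$. $p_\ell=P(Z_{\ell i}=1)$, $\pi_\ell=\mathbb E[D_i\mid Z_{\ell i}=1]-\mathbb E[D_i\mid Z_{\ell i}=0]$, $\Sigma_Z=\mathrm{Var}(\mathbf Z_i)$, $q_\ell(z_{-\ell})=P(Z_{-\ell}=z_{-\ell}\mid Z_\ell=1)$, $q^0_\ell(z_{-\ell})=P(Z_{-\ell}=z_{-\ell}\mid Z_\ell=0)$, $\varphi_t(\ell)=\sum_{z_{-\ell}}[t(1,z_{-\ell})q_\ell(z_{-\ell})-t(0,z_{-\ell})q^0_\ell(z_{-\ell})]$, and $\alpha_t(\ell)=\theta_t\varphi_t(\ell)/\pi_\ell$. Assumptions: (A1) $(Y_i(0),Y_i(1),D_i(\cdot))$ independent of $\mathbf Z_i$. (A2) $D_i(z)$ nondecreasing in each coordinate for every $i$. (A3)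 $p_\ell>0$, $\pi_\ell>0$ for all $\ell$; $\Sigma_Z$ positive definite. (A4) Positive regression dependence: for each $\ell$, $\mathbb E[f(Z_{-\ell})\mid Z_\ell=1]\ge\mathbb E[f(Z_{-\ell})\mid Z_\ell=0]$ for every nondecreasing $f:\{0,1\}^{L-1}\to\mathbb R$. *)

theory Defs
  imports "HOL-Probability.Probability"
begin

text \<open>Instruments are indexed 0..L-1 (paper: 1..L).
An instrument vector in {0,1}^L is a function nat => bool that is False beyond L.
A compliance type is an (extensional) map from instrument vectors to {0,1}.
The vector z_{-l} is encoded as an instrument vector whose l-th coordinate is False.\<close>

definition Zvecs :: "nat \<Rightarrow> (nat \<Rightarrow> bool) set" where
  "Zvecs L = {z. \<forall>i\<ge>L. \<not> z i}"

definition Types :: "nat \<Rightarrow> ((nat \<Rightarrow> bool) \<Rightarrow> bool) set" where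
  "Types L = Zvecs L \<rightarrow>\<^sub>E (UNIV :: bool set)"

definition Rest :: "nat \<Rightarrow> nat \<Rightarrow> (nat \<Rightarrow> bool) set" where
  "Rest L l = {z \<in> Zvecs L. \<not> z l}"

definition mono_type :: "nat \<Rightarrow> ((nat \<Rightarrow> bool) \<Rightarrow> bool) \<Rightarrow> bool" where
  "mono_type L t \<longleftrightarrow> (\<forall>z\<in>Zvecs L. \<forall>z'\<in>Zvecs L. z \<le> z' \<longrightarrow> (t z \<longrightarrow> t z'))"

definition zev :: "'a measure \<Rightarrow> ('a \<Rightarrow> nat \<Rightarrow> bool) \<Rightarrow> nat \<Rightarrow> bool \<Rightarrow> 'a set" where
  "zev M Z l b = {\<omega> \<in> space M. Z \<omega> l = b}"

definition cexp :: "'a measure \<Rightarrow> 'a set \<Rightarrow> ('a \<Rightarrow> real) \<Rightarrow> real" where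
  "cexp M A X = (\<integral>\<omega>. indicator A \<omega> * X \<omega> \<partial>M) / measure M A"

definition cprob :: "'a measure \<Rightarrow> 'a set \<Rightarrow> 'a set \<Rightarrow> real" where
  "cprob M B A = measure M (B \<inter> A) / measure M A"

definition Dobs :: "('a \<Rightarrow> (nat \<Rightarrow> bool) \<Rightarrow> bool) \<Rightarrow> ('a \<Rightarrow> nat \<Rightarrow> bool) \<Rightarrow> 'a \<Rightarrow> real" where
  "Dobs Dt Z \<omega> = of_bool (Dt \<omega> (Z \<omega>))"

definition p_inst :: "'a measure \<Rightarrow> ('a \<Rightarrow> nat \<Rightarrow> bool) \<Rightarrow> nat \<Rightarrow> real" where
  "p_inst M Z l = measure M (zev M Z l True)"

definition pi_inst :: "'a measure \<Rightarrow> ('a \<Rightarrow> (nat \<Rightarrow> bool) \<Rightarrow> bool) \<Rightarrow> ('a \<Rightarrow> nat \<Rightarrow> bool) \<Rightarrow> nat \<Rightarrow> real" where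
  "pi_inst M Dt Z l = cexp M (zev M Z l True) (Dobs Dt Z) - cexp M (zev M Z l False) (Dobs Dt Z)"

definition covZ :: "'a measure \<Rightarrow> ('a \<Rightarrow> nat \<Rightarrow> bool) \<Rightarrow> nat \<Rightarrow> nat \<Rightarrow> real" where
  "covZ M Z k m =
     (\<integral>\<omega>. of_bool (Z \<omega> k) * of_bool (Z \<omega> m) \<partial>M)
     - (\<integral>\<omega>. of_bool (Z \<omega> k) \<partial>M) * (\<integral>\<omega>. of_bool (Z \<omega> m) \<partial>M)"

definition pos_def_covZ :: "'a measure \<Rightarrow> nat \<Rightarrow> ('a \<Rightarrow> nat \<Rightarrow> bool) \<Rightarrow> bool" where
  "pos_def_covZ M L Z \<longleftrightarrow>
     (\<forall>v :: nat \<Rightarrow> real. (\<exists>k<L. v k \<noteq> 0) \<longrightarrow>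
        (\<Sum>k<L. \<Sum>m<L. v k * covZ M Z k m * v m) > 0)"

definition q1 :: "'a measure \<Rightarrow> ('a \<Rightarrow> nat \<Rightarrow> bool) \<Rightarrow> nat \<Rightarrow> (nat \<Rightarrow> bool) \<Rightarrow> real" where
  "q1 M Z l zm = cprob M {\<omega> \<in> space M. (Z \<omega>)(l := False) = zm} (zev M Z l True)"

definition q0 :: "'a measure \<Rightarrow> ('a \<Rightarrow> nat \<Rightarrow> bool) \<Rightarrow> nat \<Rightarrow> (nat \<Rightarrow> bool) \<Rightarrow> real" where
  "q0 M Z l zm = cprob M {\<omega> \<in> space M. (Z \<omega>)(l := False) = zm} (zev M Z l False)"

definition theta :: "'a measure \<Rightarrow> ('a \<Rightarrow> (nat \<Rightarrow> bool) \<Rightarrow> bool) \<Rightarrow> ((nat \<Rightarrow> bool) \<Rightarrow> bool) \<Rightarrow> real" where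
  "theta M Dt t = measure M {\<omega> \<in> space M. Dt \<omega> = t}"

definition phi :: "'a measure \<Rightarrow> nat \<Rightarrow> ('a \<Rightarrow> nat \<Rightarrow> bool) \<Rightarrow> ((nat \<Rightarrow> bool) \<Rightarrow> bool) \<Rightarrow> nat \<Rightarrow> real" where
  "phi M L Z t l = (\<Sum>zm\<in>Rest L l.
      of_bool (t (zm(l := True))) * q1 M Z l zm - of_bool (t zm) * q0 M Z l zm)"

definition alpha :: "'a measure \<Rightarrow> nat \<Rightarrow> ('a \<Rightarrow> (nat \<Rightarrow> bool) \<Rightarrow> bool) \<Rightarrow> ('a \<Rightarrow> nat \<Rightarrow> bool)
      \<Rightarrow> ((nat \<Rightarrow> bool) \<Rightarrow> bool) \<Rightarrow> nat \<Rightarrow> real" where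
  "alpha M L Dt Z t l = theta M Dt t * phi M L Z t l / pi_inst M Dt Z l"

end

theory Submission
  imports Defs
begin

(* Monotonicity of a type t gives t(1,z) >= t(0,z), so
   phi_t(l) >= sum_z t(0,z) (q_l(z) - q0_l(z)) = E[t(0,Z_-l) | Z_l = 1] - E[t(0,Z_-l) | Z_l = 0],
   which is nonnegative by positive regression dependence because t(0,-) is nondecreasing.
   With theta_t >= 0 and pi_l > 0 this gives alpha_t(l) >= 0; types occurring with probability
   zero have theta_t = 0. *)

lemma finite_Zvecs: "finite (Zvecs L)"
proof -
  have "Zvecs L \<subseteq> (\<lambda>S i. i \<in> S) ` Pow {..<L}"
  proof
    fix z assume "z \<in> Zvecs L"
    then have "z = (\<lambda>i. i \<in> {i. i < L \<and> z i})"
      unfolding Zvecs_def by (auto simp: fun_eq_iff) (meson not_le)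
    then show "z \<in> (\<lambda>S i. i \<in> S) ` Pow {..<L}" by blast
  qed
  then show ?thesis by (rule finite_subset) simp
qed

lemma finite_Rest: "finite (Rest L l)"
  using finite_Zvecs unfolding Rest_def by simp

lemma fun_upd_False_in_Rest: "z \<in> Zvecs L \<Longrightarrow> z(l := False) \<in> Rest L l"
  unfolding Rest_def Zvecs_def by auto

lemma fun_upd_True_in_Zvecs: "z \<in> Rest L l \<Longrightarrow> l < L \<Longrightarrow> z(l := True) \<in> Zvecs L"
  unfolding Rest_def Zvecs_def by auto

lemma mono_type_Rest:
  assumes "mono_type L t" "z \<in> Rest L l" "z' \<in> Rest L l" "z \<le> z'"
  shows "(of_bool (t z) :: real) \<le> of_bool (t z')"
  using assms unfolding mono_type_def Rest_def by auto

lemma mono_type_fun_upd_True: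
  assumes "mono_type L t" "z \<in> Rest L l" "l < L"
  shows "(of_bool (t z) :: real) \<le> of_bool (t (z(l := True)))"
proof -
  have "z \<le> z(l := True)" by (simp add: le_fun_def)
  with assms fun_upd_True_in_Zvecs show ?thesis
    unfolding mono_type_def Rest_def by auto
qed

lemma cexp_comp_eq_sum_cprob:
  assumes "finite_measure M" "finite S" "A \<in> sets M"
    and g_meas: "g \<in> M \<rightarrow>\<^sub>M count_space UNIV"
    and g_range: "\<And>\<omega>. \<omega> \<in> space M \<Longrightarrow> g \<omega> \<in> S"
  shows "cexp M A (\<lambda>\<omega>. f (g \<omega>)) = (\<Sum>s\<in>S. f s * cprob M {\<omega> \<in> space M. g \<omega> = s} A)"
proof -
  interpret finite_measure M by (rule assms(1))
  define B where "B s = {\<omega> \<in> space M. g \<omega> = s}" for s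
  have B_sets: "B s \<inter> A \<in> sets M" for s
  proof -
    have "B s = g -` {s} \<inter> space M" by (auto simp: B_def)
    then show ?thesis using measurable_sets[OF g_meas] \<open>A \<in> sets M\<close> by auto
  qed
  have pointwise: "indicator A \<omega> * f (g \<omega>) = (\<Sum>s\<in>S. f s * indicator (B s \<inter> A) \<omega>)"
    if "\<omega> \<in> space M" for \<omega>
  proof -
    have "(\<Sum>s\<in>S. f s * indicator (B s \<inter> A) \<omega>) =
        (\<Sum>s\<in>S. if s = g \<omega> then f (g \<omega>) * indicator A \<omega> else 0)"
      by (rule sum.cong) (auto simp: B_def indicator_def that)
    also have "\<dots> = f (g \<omega>) * indicator A \<omega>"
      using g_range[OF that] \<open>finite S\<close> by (simp add: sum.delta')
    finally show ?thesis by simp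
  qed
  have "(\<integral>\<omega>. indicator A \<omega> * f (g \<omega>) \<partial>M) = (\<integral>\<omega>. (\<Sum>s\<in>S. f s * indicator (B s \<inter> A) \<omega>) \<partial>M)"
    by (rule Bochner_Integration.integral_cong) (simp_all add: pointwise)
  also have "\<dots> = (\<Sum>s\<in>S. \<integral>\<omega>. f s * indicator (B s \<inter> A) \<omega> \<partial>M)"
    using B_sets by (intro Bochner_Integration.integral_sum integrable_mult_right integrable_real_indicator)
      (auto simp: emeasure_eq_measure)
  also have "\<dots> = (\<Sum>s\<in>S. f s * measure M (B s \<inter> A))"
    using B_sets by simp
  finally show ?thesis
    unfolding cexp_def cprob_def B_def by (simp add: sum_divide_distrib)
qed

lemma sets_zev:
  assumes "Z \<in> M \<rightarrow>\<^sub>M count_space (Zvecs L)"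
  shows "zev M Z l b \<in> sets M"
proof -
  have "zev M Z l b = Z -` {z \<in> Zvecs L. z l = b} \<inter> space M"
    using assms by (auto simp: zev_def measurable_def)
  also have "\<dots> \<in> sets M" by (rule measurable_sets[OF assms]) auto
  finally show ?thesis .
qed

lemma cexp_zev_eq_sum_cprob:
  assumes "finite_measure M" "Z \<in> M \<rightarrow>\<^sub>M count_space (Zvecs L)"
  shows "cexp M (zev M Z l b) (\<lambda>\<omega>. f ((Z \<omega>)(l := False))) =
    (\<Sum>zm\<in>Rest L l. f zm * cprob M {\<omega> \<in> space M. (Z \<omega>)(l := False) = zm} (zev M Z l b))"
proof (rule cexp_comp_eq_sum_cprob[OF assms(1) finite_Rest sets_zev[OF assms(2)]])
  have "(\<lambda>z. z(l := False)) \<circ> Z \<in> M \<rightarrow>\<^sub>M count_space UNIV"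
    by (rule measurable_comp[OF assms(2)]) simp
  then show "(\<lambda>\<omega>. (Z \<omega>)(l := False)) \<in> M \<rightarrow>\<^sub>M count_space UNIV"
    by (simp add: o_def)
  show "(Z \<omega>)(l := False) \<in> Rest L l" if "\<omega> \<in> space M" for \<omega>
    using that assms(2) fun_upd_False_in_Rest by (auto simp: measurable_def)
qed

lemma phi_ge_cexp_diff:
  assumes "finite_measure M" "Z \<in> M \<rightarrow>\<^sub>M count_space (Zvecs L)"
    and "mono_type L t" "l < L"
  shows "phi M L Z t l \<ge>
    cexp M (zev M Z l True) (\<lambda>\<omega>. of_bool (t ((Z \<omega>)(l := False))))
      - cexp M (zev M Z l False) (\<lambda>\<omega>. of_bool (t ((Z \<omega>)(l := False))))"
proof -
  have "(\<Sum>zm\<in>Rest L l. of_bool (t zm) * q1 M Z l zm - of_bool (t zm) * q0 M Z l zm)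
      \<le> phi M L Z t l"
    unfolding phi_def
  proof (rule sum_mono)
    fix zm assume "zm \<in> Rest L l"
    have "q1 M Z l zm \<ge> 0" by (simp add: q1_def cprob_def)
    with mono_type_fun_upd_True[OF assms(3) \<open>zm \<in> Rest L l\<close> assms(4)]
    show "of_bool (t zm) * q1 M Z l zm - of_bool (t zm) * q0 M Z l zm
        \<le> of_bool (t (zm(l := True))) * q1 M Z l zm - of_bool (t zm) * q0 M Z l zm"
      by (simp add: mult_right_mono)
  qed
  then show ?thesis
    by (simp add: cexp_zev_eq_sum_cprob[OF assms(1,2), where f = "\<lambda>z. of_bool (t z)"]
        sum_subtractf q1_def q0_def)
qed

lemma theta_nonzero_imp_realized:
  assumes "theta M Dt t \<noteq> 0"
  shows "\<exists>\<omega>\<in>space M. Dt \<omega> = t"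
proof (rule ccontr)
  assume "\<not> (\<exists>\<omega>\<in>space M. Dt \<omega> = t)"
  then have "{\<omega> \<in> space M. Dt \<omega> = t} = {}" by blast
  with assms show False by (simp add: theta_def)
qed

theorem proposition2:
  fixes M :: "'a measure" and L :: nat
    and Y0 Y1 :: "'a \<Rightarrow> real"
    and Dt :: "'a \<Rightarrow> (nat \<Rightarrow> bool) \<Rightarrow> bool"
    and Z :: "'a \<Rightarrow> nat \<Rightarrow> bool"
  assumes prob: "prob_space M"
    and L2: "L \<ge> 2"
    and Y0_meas: "Y0 \<in> borel_measurable M"
    and Y1_meas: "Y1 \<in> borel_measurable M"
    and Dt_meas: "Dt \<in> M \<rightarrow>\<^sub>M count_space (Types L)"
    and Z_meas: "Z \<in> M \<rightarrow>\<^sub>M count_space (Zvecs L)"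
    and A1: "prob_space.indep_set M
               {(\<lambda>\<omega>. (Y0 \<omega>, Y1 \<omega>, Dt \<omega>)) -` A \<inter> space M | A.
                  A \<in> sets (borel \<Otimes>\<^sub>M (borel \<Otimes>\<^sub>M count_space (Types L)))}
               {Z -` B \<inter> space M | B. B \<in> sets (count_space (Zvecs L))}"
    and A2: "\<forall>\<omega>\<in>space M. mono_type L (Dt \<omega>)"
    and A3_p: "\<forall>l<L. p_inst M Z l > 0"
    and A3_pi: "\<forall>l<L. pi_inst M Dt Z l > 0"
    and A3_cov: "pos_def_covZ M L Z"
    and A4: "\<forall>l<L. \<forall>f :: (nat \<Rightarrow> bool) \<Rightarrow> real.
               (\<forall>z\<in>Rest L l. \<forall>z'\<in>Rest L l. z \<le> z' \<longrightarrow> f z \<le> f z') \<longrightarrow>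
               cexp M (zev M Z l True) (\<lambda>\<omega>. f ((Z \<omega>)(l := False)))
                 \<ge> cexp M (zev M Z l False) (\<lambda>\<omega>. f ((Z \<omega>)(l := False)))"
  shows "\<forall>t\<in>Types L. \<forall>l<L. alpha M L Dt Z t l \<ge> 0"
proof (intro ballI allI impI)
  fix t l assume "t \<in> Types L" and l: "l < L"
  interpret prob_space M by (rule prob)
  have theta_nonneg: "theta M Dt t \<ge> 0" by (simp add: theta_def)
  have "theta M Dt t * phi M L Z t l \<ge> 0"
  proof (cases "theta M Dt t = 0")
    case False
    then have mono: "mono_type L t" using A2 theta_nonzero_imp_realized by blast
    have "cexp M (zev M Z l False) (\<lambda>\<omega>. of_bool (t ((Z \<omega>)(l := False))))
        \<le> cexp M (zev M Z l True) (\<lambda>\<omega>. of_bool (t ((Z \<omega>)(l := False))))"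
      using A4[rule_format, OF l, of "\<lambda>z. of_bool (t z)"] mono_type_Rest[OF mono] by blast
    then have "phi M L Z t l \<ge> 0"
      using phi_ge_cexp_diff[OF finite_measure_axioms Z_meas mono l] by linarith
    with theta_nonneg show ?thesis by simp
  qed simp
  moreover have "pi_inst M Dt Z l > 0" using A3_pi l by blast
  ultimately show "alpha M L Dt Z t l \<ge> 0" by (simp add: alpha_def)
qed

end
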